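(* For each $d\ge0$ and standard basis $\{v_i\}_{i=0}^d$ of $\mathcal V(d)$, $$Pv_0=\sum_{i=0}^d v_i,\qquad P^2v_0=\sum_{i=0}^d Pv_i,\qquad (-1)^dv_0=\sum_{i=0}^d P^2v_i.$$
   Context: $\mathbb F$ is a field of characteristic zero, $\mathfrak{sl}_2$ the Lie algebra of $2\times2$ trace-zero matrices over $\mathbb F$, with $e=\begin{pmatrix}0&1\\0&0\end{pmatrix}$, $f=\begin{pmatrix}0&0\\1&0\end{pmatrix}$, $h=\begin{pmatrix}1&0\\0&-1\end{pmatrix}$. $\mathcal V(d)$ is the $(d+1)$-dimensional irreducible $\mathfrak{sl}_2$-module; a standard basis $\{v_i\}_{i=0}^d$ satisfies $h.v_i=(d-2i)v_i$, $f.v_i=(i+1)v_{i+1}$, $e.v_i=(d-i+1)v_{i-1}$, $v_{-1}=v_{d+1}=0$; $\varphi_d$ is the corresponding representation. Put $x^*=h-e+f$, $y^*=f$ (nilpotent) and $P=\exp(\varphi_d(x^* ))\exp(\varphi_d(y^* ))$, where $\exp(\varphi_d(u))=\sum_n\varphi_d(u)^n/n!$. *)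

theory Defs
  imports "Jordan_Normal_Form.Matrix"
begin

definition sl2_e :: "'a::field mat" where
  "sl2_e = mat 2 2 (\<lambda>(i,j). if i = 0 \<and> j = 1 then 1 else 0)"
definition sl2_f :: "'a::field mat" where
  "sl2_f = mat 2 2 (\<lambda>(i,j). if i = 1 \<and> j = 0 then 1 else 0)"
definition sl2_h :: "'a::field mat" where
  "sl2_h = mat 2 2 (\<lambda>(i,j). if i = j then (if i = 0 then 1 else -1) else 0)"

text \<open>Action of e, f, h on V(d) = F^(d+1) w.r.t. the standard basis v_0..v_d
  (v_i is the i-th unit vector): h.v_i=(d-2i)v_i, f.v_i=(i+1)v_(i+1),
  e.v_i=(d-i+1)v_(i-1). Matrix entry (r,c) is the r-th coordinate of the image of v_c.\<close>
definition rep_h :: "nat \<Rightarrow> 'a::field_char_0 mat" where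
  "rep_h d = mat (d+1) (d+1) (\<lambda>(r,c). if r = c then of_int (int d - 2 * int c) else 0)"
definition rep_f :: "nat \<Rightarrow> 'a::field_char_0 mat" where
  "rep_f d = mat (d+1) (d+1) (\<lambda>(r,c). if r = c + 1 then of_nat (c + 1) else 0)"
definition rep_e :: "nat \<Rightarrow> 'a::field_char_0 mat" where
  "rep_e d = mat (d+1) (d+1) (\<lambda>(r,c). if c = r + 1 then of_nat (d - c + 1) else 0)"

text \<open>The representation phi_d, extended linearly: X = a h + b e + c f for trace-zero X.\<close>
definition phi :: "nat \<Rightarrow> 'a::field_char_0 mat \<Rightarrow> 'a mat" where
  "phi d X = X $$ (0,0) \<cdot>\<^sub>m rep_h d + X $$ (0,1) \<cdot>\<^sub>m rep_e d + X $$ (1,0) \<cdot>\<^sub>m rep_f d"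

text \<open>Exponential of a nilpotent square matrix: the series sum A^n/n!, which is a
  finite sum since A^k = 0 for k beyond the nilpotency index.\<close>
definition mexp :: "'a::field_char_0 mat \<Rightarrow> 'a mat" where
  "mexp A = mat (dim_row A) (dim_col A)
     (\<lambda>(i,j). \<Sum>n < (LEAST k. A ^\<^sub>m k = 0\<^sub>m (dim_row A) (dim_col A)).
                 (A ^\<^sub>m n) $$ (i,j) / fact n)"

definition xstar :: "'a::field mat" where "xstar = sl2_h - sl2_e + sl2_f"
definition ystar :: "'a::field mat" where "ystar = sl2_f"

definition Pmat :: "nat \<Rightarrow> 'a::field_char_0 mat" where
  "Pmat d = mexp (phi d xstar) * mexp (phi d ystar)"

definition vb :: "nat \<Rightarrow> nat \<Rightarrow> 'a::field_char_0 vec" where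
  "vb d i = unit_vec (d+1) i"
definition vsum :: "nat \<Rightarrow> (nat \<Rightarrow> 'a::field_char_0 vec) \<Rightarrow> 'a vec" where
  "vsum d g = vec (d+1) (\<lambda>r. \<Sum>i\<le>d. g i $ r)"

end

theory Submission
  imports Defs
begin

(* Identify u(a,b) = sum_r a^(d-r) b^r v_r in V(d).  We show that
   P u(a,b) = u(a-b, a) for all a, b; since v_0 = u(1,0) and sum_i v_i = u(1,1),
   the three claims are the orbit u(1,0) -> u(1,1) -> u(0,1) -> u(-1,0) = (-1)^d v_0
   together with linearity of P.

   exp(phi_d(ystar)) = exp(phi_d(f)) is the lower binomial matrix L = (C(r,c)), acting by
   u(a,b) -> u(a,a+b).  For exp(phi_d(xstar)) we use that the upper binomial matrix
   U = (C(d-r,c-r)) (which is exp(phi_d(e))) intertwines phi_d(xstar) with phi_d(f).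
   Being unitriangular, U transports nilpotency, so exp(phi_d(xstar)) U = U L, and U acts
   by u(a,b) -> u(a+b,b). *)

(* The defining series of mexp may be truncated at any nilpotency bound m, not only
  at the least one; this frees all later arguments from the LEAST operator. *)
lemma mexp_nilpotent:
  fixes A :: "'a::field_char_0 mat"
  assumes A: "A \<in> carrier_mat n n" and nil: "A ^\<^sub>m m = 0\<^sub>m n n"
  shows "mexp A = mat n n (\<lambda>(i,j). \<Sum>k<m. (A ^\<^sub>m k) $$ (i,j) / fact k)"
proof -
  define L where "L = (LEAST k. A ^\<^sub>m k = 0\<^sub>m n n)"
  have L_nil: "A ^\<^sub>m L = 0\<^sub>m n n" and L_le: "L \<le> m"
    unfolding L_def using nil by (auto intro: LeastI Least_le)
  have beyond_L: "A ^\<^sub>m (L + t) = 0\<^sub>m n n" for t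
    by (induct t) (use L_nil A in auto)
  have "(\<Sum>k<m. (A ^\<^sub>m k) $$ (i,j) / fact k) = (\<Sum>k<L. (A ^\<^sub>m k) $$ (i,j) / fact k)"
    if "i < n" "j < n" for i j
  proof -
    have tail: "(A ^\<^sub>m k) $$ (i,j) / fact k = 0" if "k \<in> {L..<m}" for k
      using that beyond_L[of "k - L"] \<open>i < n\<close> \<open>j < n\<close> by simp
    have "{..<m} = {..<L} \<union> {L..<m}" "{..<L} \<inter> {L..<m} = {}" using L_le by auto
    then show ?thesis using tail by (simp add: sum.union_disjoint)
  qed
  moreover have dims: "dim_row A = n" "dim_col A = n" using A by auto
  ultimately show ?thesis
    unfolding mexp_def dims L_def[symmetric] by (intro eq_matI) auto
qed

lemma series_mult_right:
  fixes A :: "nat \<Rightarrow> 'a::field mat"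
  assumes A: "\<And>k. A k \<in> carrier_mat n n" and B: "B \<in> carrier_mat n n" and ij: "i < n" "j < n"
  shows "(mat n n (\<lambda>(i,j). \<Sum>k<m. A k $$ (i,j) / c k) * B) $$ (i,j)
       = (\<Sum>k<m. (A k * B) $$ (i,j) / c k)"
proof -
  have "(mat n n (\<lambda>(i,j). \<Sum>k<m. A k $$ (i,j) / c k) * B) $$ (i,j)
      = (\<Sum>l<n. (\<Sum>k<m. A k $$ (i,l) / c k) * B $$ (l,j))"
    using B ij by (simp add: scalar_prod_def atLeast0LessThan)
  also have "\<dots> = (\<Sum>k<m. (\<Sum>l<n. A k $$ (i,l) * B $$ (l,j)) / c k)"
    by (simp add: sum_distrib_right sum_divide_distrib, subst sum.swap) (simp add: algebra_simps)
  also have "\<dots> = (\<Sum>k<m. (A k * B) $$ (i,j) / c k)"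
    using carrier_matD[OF A] B ij by (intro sum.cong refl) (simp add: scalar_prod_def atLeast0LessThan)
  finally show ?thesis .
qed

lemma series_mult_left:
  fixes A :: "nat \<Rightarrow> 'a::field mat"
  assumes A: "\<And>k. A k \<in> carrier_mat n n" and B: "B \<in> carrier_mat n n" and ij: "i < n" "j < n"
  shows "(B * mat n n (\<lambda>(i,j). \<Sum>k<m. A k $$ (i,j) / c k)) $$ (i,j)
       = (\<Sum>k<m. (B * A k) $$ (i,j) / c k)"
proof -
  have "(B * mat n n (\<lambda>(i,j). \<Sum>k<m. A k $$ (i,j) / c k)) $$ (i,j)
      = (\<Sum>l<n. B $$ (i,l) * (\<Sum>k<m. A k $$ (l,j) / c k))"
    using B ij by (simp add: scalar_prod_def atLeast0LessThan)
  also have "\<dots> = (\<Sum>k<m. (\<Sum>l<n. B $$ (i,l) * A k $$ (l,j)) / c k)"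
    by (simp add: sum_distrib_left sum_divide_distrib, subst sum.swap) (simp add: algebra_simps)
  also have "\<dots> = (\<Sum>k<m. (B * A k) $$ (i,j) / c k)"
    using carrier_matD[OF A] B ij by (intro sum.cong refl) (simp add: scalar_prod_def atLeast0LessThan)
  finally show ?thesis .
qed

lemma pow_intertwine:
  fixes A B S :: "'a::semiring_1 mat"
  assumes A: "A \<in> carrier_mat n n" and B: "B \<in> carrier_mat n n" and S: "S \<in> carrier_mat n n"
    and AS: "A * S = S * B"
  shows "A ^\<^sub>m k * S = S * B ^\<^sub>m k"
proof (induct k)
  case (Suc k)
  have "A ^\<^sub>m Suc k * S = A ^\<^sub>m k * (A * S)"
    using assoc_mult_mat[OF pow_carrier_mat[OF A] A S] by simp
  also have "\<dots> = (A ^\<^sub>m k * S) * B"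
    unfolding AS using assoc_mult_mat[OF pow_carrier_mat[OF A] S B] by simp
  also have "\<dots> = S * B ^\<^sub>m Suc k"
    unfolding Suc using assoc_mult_mat[OF S pow_carrier_mat[OF B] B] by simp
  finally show ?case .
qed (use A B S in simp)

lemma unit_upper_triangular_cancel:
  fixes M S :: "'a::comm_ring_1 mat"
  assumes S: "S \<in> carrier_mat n n" and tri: "upper_triangular S"
    and diag: "\<And>j. j < n \<Longrightarrow> S $$ (j,j) = 1"
    and M: "M \<in> carrier_mat k n" and MS: "M * S = 0\<^sub>m k n"
  shows "M = 0\<^sub>m k n"
proof -
  have "M $$ (i,c) = 0" if "c < n" "i < k" for i c
    using that
  proof (induct c arbitrary: i rule: less_induct)
    case (less c)
    have "0 = (\<Sum>j<n. M $$ (i,j) * S $$ (j,c))"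
      using arg_cong[OF MS, of "\<lambda>X. X $$ (i,c)"] less.prems S M
      by (simp add: scalar_prod_def atLeast0LessThan)
    also have "\<dots> = (\<Sum>j<n. if j = c then M $$ (i,c) else 0)"
    proof (intro sum.cong refl)
      fix j assume "j \<in> {..<n}"
      then show "M $$ (i,j) * S $$ (j,c) = (if j = c then M $$ (i,c) else 0)"
        using less tri S diag by (cases j c rule: linorder_cases) (auto dest: upper_triangularD)
    qed
    also have "\<dots> = M $$ (i,c)" using less.prems by simp
    finally show ?case by simp
  qed
  then show ?thesis using M by (intro eq_matI) auto
qed

lemma nilpotent_intertwine:
  fixes A B S :: "'a::comm_ring_1 mat"
  assumes A: "A \<in> carrier_mat n n" and B: "B \<in> carrier_mat n n" and S: "S \<in> carrier_mat n n"
    and AS: "A * S = S * B" and tri: "upper_triangular S" and diag: "\<And>j. j < n \<Longrightarrow> S $$ (j,j) = 1"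
    and nil: "B ^\<^sub>m m = 0\<^sub>m n n"
  shows "A ^\<^sub>m m = 0\<^sub>m n n"
proof (rule unit_upper_triangular_cancel[OF S tri diag])
  show "A ^\<^sub>m m \<in> carrier_mat n n" using A by simp
  show "A ^\<^sub>m m * S = 0\<^sub>m n n"
    unfolding pow_intertwine[OF A B S AS] nil using S by simp
qed

lemma mexp_intertwine:
  fixes A B S :: "'a::field_char_0 mat"
  assumes A: "A \<in> carrier_mat n n" and B: "B \<in> carrier_mat n n" and S: "S \<in> carrier_mat n n"
    and AS: "A * S = S * B" and nilA: "A ^\<^sub>m m = 0\<^sub>m n n" and nilB: "B ^\<^sub>m m = 0\<^sub>m n n"
  shows "mexp A * S = S * mexp B"
proof (rule eq_matI)
  fix i j assume "i < dim_row (S * mexp B)" "j < dim_col (S * mexp B)"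
  then have ij: "i < n" "j < n" using S B by (auto simp: mexp_nilpotent[OF B nilB])
  have "(mexp A * S) $$ (i,j) = (\<Sum>k<m. (A ^\<^sub>m k * S) $$ (i,j) / fact k)"
    unfolding mexp_nilpotent[OF A nilA] using A S ij by (intro series_mult_right) auto
  also have "\<dots> = (\<Sum>k<m. (S * B ^\<^sub>m k) $$ (i,j) / fact k)"
    unfolding pow_intertwine[OF A B S AS] ..
  also have "\<dots> = (S * mexp B) $$ (i,j)"
    unfolding mexp_nilpotent[OF B nilB] using B S ij by (intro series_mult_left[symmetric]) auto
  finally show "(mexp A * S) $$ (i,j) = (S * mexp B) $$ (i,j)" .
qed (use A B S in \<open>auto simp: mexp_nilpotent[OF A nilA] mexp_nilpotent[OF B nilB]\<close>)

definition xstar_rep :: "nat \<Rightarrow> 'a::field_char_0 mat" where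
  "xstar_rep d = mat (d+1) (d+1) (\<lambda>(r,c).
     (if r = c then of_int (int d - 2 * int c) else 0)
     - (if c = r + 1 then of_nat (d - c + 1) else 0)
     + (if r = c + 1 then of_nat (c + 1) else 0))"

lemma phi_xstar: "phi d xstar = (xstar_rep d :: 'a::field_char_0 mat)"
  unfolding phi_def xstar_def xstar_rep_def rep_h_def rep_e_def rep_f_def
    sl2_h_def sl2_e_def sl2_f_def
  by (rule eq_matI) auto

lemma phi_ystar: "phi d ystar = (rep_f d :: 'a::field_char_0 mat)"
  unfolding phi_def ystar_def rep_h_def rep_e_def rep_f_def sl2_f_def
  by (rule eq_matI) auto

lemma xstar_rep_carrier [simp]: "xstar_rep d \<in> carrier_mat (Suc d) (Suc d)"
  by (simp add: xstar_rep_def)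

lemma rep_f_carrier [simp]: "rep_f d \<in> carrier_mat (Suc d) (Suc d)"
  by (simp add: rep_f_def)

lemma rep_f_pow:
  assumes "r \<le> d" "c \<le> d"
  shows "(rep_f d ^\<^sub>m k :: 'a::field_char_0 mat) $$ (r,c) = (if r = c + k then fact r / fact c else 0)"
  using assms
proof (induct k arbitrary: c)
  case 0
  then show ?case by (simp add: rep_f_def)
next
  case (Suc k)
  have "(rep_f d ^\<^sub>m Suc k :: 'a mat) $$ (r,c)
      = (\<Sum>j<Suc d. (rep_f d ^\<^sub>m k :: 'a mat) $$ (r,j) * (rep_f d :: 'a mat) $$ (j,c))"
    using Suc.prems by (simp add: scalar_prod_def atLeast0LessThan rep_f_def)
  also have "\<dots> = (\<Sum>j<Suc d. if j = c + 1 then (rep_f d ^\<^sub>m k :: 'a mat) $$ (r, c + 1) * of_nat (c + 1) else 0)"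
    using Suc.prems by (intro sum.cong refl) (auto simp: rep_f_def)
  also have "\<dots> = (if r = c + Suc k then fact r / fact c else 0)"
  proof -
    have "fact r / fact (Suc c) * of_nat (Suc c) = (fact r / fact c :: 'a)"
      by (simp add: fact_Suc del: of_nat_Suc)
    then show ?thesis using Suc by auto
  qed
  finally show ?case .
qed

lemma rep_f_nilpotent: "(rep_f d ^\<^sub>m Suc d :: 'a::field_char_0 mat) = 0\<^sub>m (Suc d) (Suc d)"
proof (rule eq_matI)
  fix i j assume "i < dim_row (0\<^sub>m (Suc d) (Suc d) :: 'a mat)" "j < dim_col (0\<^sub>m (Suc d) (Suc d) :: 'a mat)"
  then show "(rep_f d ^\<^sub>m Suc d :: 'a mat) $$ (i,j) = 0\<^sub>m (Suc d) (Suc d) $$ (i,j)"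
    using rep_f_pow[of i d j "Suc d"] by (simp del: pow_mat.simps)
qed (use pow_carrier_mat[OF rep_f_carrier] in \<open>auto simp: rep_f_def simp del: pow_mat.simps\<close>)

definition binom_low :: "nat \<Rightarrow> 'a::field_char_0 mat" where
  "binom_low d = mat (d+1) (d+1) (\<lambda>(r,c). of_nat (r choose c))"

lemma binom_low_carrier [simp]: "binom_low d \<in> carrier_mat (Suc d) (Suc d)"
  by (simp add: binom_low_def)

lemma mexp_rep_f: "mexp (rep_f d) = (binom_low d :: 'a::field_char_0 mat)"
proof (rule eq_matI)
  fix i j assume "i < dim_row (binom_low d :: 'a mat)" "j < dim_col (binom_low d :: 'a mat)"
  then have ij: "i \<le> d" "j \<le> d" by (auto simp: binom_low_def)
  have "(\<Sum>k<Suc d. (rep_f d ^\<^sub>m k :: 'a mat) $$ (i,j) / fact k)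
      = (\<Sum>k<Suc d. if k = i - j then (if j \<le> i then fact i / fact j / fact k else 0) else 0)"
    using ij by (intro sum.cong refl) (auto simp: rep_f_pow)
  also have "\<dots> = of_nat (i choose j)"
    using ij by (auto simp: binomial_fact binomial_eq_0 simp del: sum.lessThan_Suc)
  finally show "mexp (rep_f d) $$ (i,j) = (binom_low d :: 'a mat) $$ (i,j)"
    using ij by (simp add: mexp_nilpotent[OF rep_f_carrier rep_f_nilpotent] binom_low_def)
qed (simp_all add: mexp_nilpotent[OF rep_f_carrier rep_f_nilpotent] binom_low_def)

(* The binomial identity behind the intertwining relation below; it combines Pascal's
  rule with the absorption identity (k+1) C(n,k+1) = (n-k) C(n,k). *)
lemma binomial_three_term:
  "n * (n choose k) + r * (Suc n choose Suc k)
     = (r + k + 1) * (n choose Suc k) + r * (n choose k) + k * (n choose k)"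
proof -
  have absorb: "Suc k * (n choose Suc k) = (n - k) * (n choose k)"
    using binomial_absorption[of k n] binomial_absorb_comp[of n k] by simp
  have split: "(n - k) * (n choose k) + k * (n choose k) = n * (n choose k)"
    by (cases "k \<le> n") (auto simp: binomial_eq_0 simp flip: add_mult_distrib)
  have "n * (n choose k) + r * (Suc n choose Suc k)
      = Suc k * (n choose Suc k) + k * (n choose k) + r * (n choose Suc k) + r * (n choose k)"
    by (simp only: absorb split binomial_Suc_Suc) (simp add: algebra_simps)
  then show ?thesis by (simp add: algebra_simps)
qed

(* The upper binomial matrix with entries C(d-r, c-r); it is exp(phi_d(e)), and
  since Ad(exp e) f = f + h - e it conjugates phi_d(f) into phi_d(xstar). *)
definition up_binom :: "nat \<Rightarrow> nat \<Rightarrow> nat \<Rightarrow> 'a::field_char_0" where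
  "up_binom d r c = (if r \<le> c then of_nat ((d - r) choose (c - r)) else 0)"

definition binom_up :: "nat \<Rightarrow> 'a::field_char_0 mat" where
  "binom_up d = mat (d+1) (d+1) (\<lambda>(r,c). up_binom d r c)"

lemma binom_up_carrier [simp]: "binom_up d \<in> carrier_mat (Suc d) (Suc d)"
  by (simp add: binom_up_def)

(* The (r,c) entry of the relation phi_d(xstar) U = U phi_d(f), for U = binom_up d. *)
lemma up_binom_recurrence:
  assumes "r \<le> d" "c \<le> d"
  shows "of_int (int d - 2 * int r) * up_binom d r c - of_nat (d - r) * up_binom d (Suc r) c
           + of_nat r * up_binom d (r - 1) c
       = (up_binom d r (Suc c) * of_nat (Suc c) :: 'a::field_char_0)"
proof (cases "r \<le> c")
  case False
  then consider "Suc c < r" | "Suc c = r" by linarith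
  then show ?thesis by cases (auto simp: up_binom_def)
next
  case True
  then obtain k where k: "c = r + k" by (metis le_add_diff_inverse)
  define n where "n = d - r"
  have lhs1: "up_binom d r c = (of_nat (n choose k) :: 'a)"
    using k by (simp add: up_binom_def n_def)
  have lhs2: "of_nat (d - r) * up_binom d (Suc r) c = (of_nat (k * (n choose k)) :: 'a)"
    using k times_binomial_minus1_eq[of k n]
    by (cases k) (simp_all add: up_binom_def n_def diff_diff_add)
  have lhs3: "of_nat r * up_binom d (r - 1) c = (of_nat (r * (Suc n choose Suc k)) :: 'a)"
  proof (cases r)
    case (Suc q)
    then have "d - q = Suc n" "c - q = Suc k" using k assms by (simp_all add: n_def)
    then show ?thesis using Suc k by (simp add: up_binom_def algebra_simps del: binomial_Suc_Suc)
  qed simp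
  have rhs: "up_binom d r (Suc c) * of_nat (Suc c) = (of_nat ((r + k + 1) * (n choose Suc k)) :: 'a)"
    using k by (simp add: up_binom_def n_def Suc_diff_le algebra_simps)
  have weight: "(of_int (int d - 2 * int r) :: 'a) = of_nat n - of_nat r"
    using assms by (simp add: n_def of_nat_diff)
  have "(of_nat (n * (n choose k) + r * (Suc n choose Suc k)) :: 'a)
      = of_nat ((r + k + 1) * (n choose Suc k) + r * (n choose k) + k * (n choose k))"
    by (simp only: binomial_three_term)
  then show ?thesis unfolding lhs1 lhs2 lhs3 rhs weight
    by (simp only: of_nat_add of_nat_mult) (simp add: algebra_simps)
qed

lemma xstar_binom_up: "xstar_rep d * binom_up d = binom_up d * (rep_f d :: 'a::field_char_0 mat)"
proof (rule eq_matI)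
  fix r c assume "r < dim_row (binom_up d * (rep_f d :: 'a mat))" "c < dim_col (binom_up d * (rep_f d :: 'a mat))"
  then have r: "r \<le> d" and c: "c \<le> d" by (auto simp: binom_up_def rep_f_def)
  have "(xstar_rep d * binom_up d :: 'a mat) $$ (r,c)
      = (\<Sum>j<Suc d. (xstar_rep d :: 'a mat) $$ (r,j) * up_binom d j c)"
    using r c carrier_matD[OF xstar_rep_carrier[where 'a='a, of d]]
    by (simp add: scalar_prod_def atLeast0LessThan binom_up_def del: sum.lessThan_Suc)
  also have "\<dots> = (\<Sum>j<Suc d. (if j = r then of_int (int d - 2 * int r) * up_binom d r c else 0)
      - (if j = Suc r then of_nat (d - r) * up_binom d (Suc r) c else 0)
      + (if j = r - 1 then of_nat r * up_binom d (r - 1) c else 0))"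
    using r by (intro sum.cong refl) (auto simp: xstar_rep_def of_nat_diff algebra_simps)
  also have "\<dots> = of_int (int d - 2 * int r) * up_binom d r c
      - of_nat (d - r) * up_binom d (Suc r) c + of_nat r * up_binom d (r - 1) c"
    using r by (auto simp: sum.distrib sum_subtractf simp del: sum.lessThan_Suc)
  also have "\<dots> = up_binom d r (Suc c) * of_nat (Suc c)"
    using r c by (rule up_binom_recurrence)
  also have "\<dots> = (\<Sum>j<Suc d. if j = Suc c then up_binom d r (Suc c) * of_nat (Suc c) else 0)"
    using r c by (auto simp: up_binom_def binomial_eq_0 simp del: sum.lessThan_Suc)
  also have "\<dots> = (\<Sum>j<Suc d. up_binom d r j * (rep_f d :: 'a mat) $$ (j,c))"
    using c by (intro sum.cong refl) (auto simp: rep_f_def)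
  also have "\<dots> = (binom_up d * (rep_f d :: 'a mat)) $$ (r,c)"
    using r c carrier_matD[OF rep_f_carrier[where 'a='a, of d]]
    by (simp add: scalar_prod_def atLeast0LessThan binom_up_def del: sum.lessThan_Suc)
  finally show "(xstar_rep d * binom_up d :: 'a mat) $$ (r,c) = (binom_up d * (rep_f d :: 'a mat)) $$ (r,c)" .
qed (auto simp: binom_up_def xstar_rep_def rep_f_def)

lemma binom_up_unit_upper_triangular:
  "upper_triangular (binom_up d :: 'a::field_char_0 mat)"
  "\<And>j. j < Suc d \<Longrightarrow> (binom_up d :: 'a mat) $$ (j,j) = 1"
  by (auto simp: binom_up_def up_binom_def upper_triangular_def)

lemma xstar_rep_nilpotent: "(xstar_rep d ^\<^sub>m Suc d :: 'a::field_char_0 mat) = 0\<^sub>m (Suc d) (Suc d)"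
  by (rule nilpotent_intertwine[OF xstar_rep_carrier rep_f_carrier binom_up_carrier
        xstar_binom_up binom_up_unit_upper_triangular rep_f_nilpotent])

lemma mexp_xstar_binom_up:
  "mexp (xstar_rep d) * binom_up d = binom_up d * (binom_low d :: 'a::field_char_0 mat)"
  unfolding mexp_rep_f[symmetric]
  by (rule mexp_intertwine[OF xstar_rep_carrier rep_f_carrier binom_up_carrier
        xstar_binom_up xstar_rep_nilpotent rep_f_nilpotent])

definition power_vec :: "nat \<Rightarrow> 'a::field_char_0 \<Rightarrow> 'a \<Rightarrow> 'a vec" where
  "power_vec d a b = vec (d+1) (\<lambda>r. a ^ (d - r) * b ^ r)"

lemma power_vec_carrier [simp]: "power_vec d a b \<in> carrier_vec (Suc d)"
  by (simp add: power_vec_def)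

lemma binom_low_power_vec: "binom_low d *\<^sub>v power_vec d a b = power_vec d a (a + b)"
proof (rule eq_vecI)
  fix r assume "r < dim_vec (power_vec d a (a + b))"
  then have r: "r \<le> d" by (simp add: power_vec_def)
  have "(binom_low d *\<^sub>v power_vec d a b) $ r = (\<Sum>c<Suc d. of_nat (r choose c) * (a ^ (d - c) * b ^ c))"
    using r by (simp add: binom_low_def power_vec_def scalar_prod_def atLeast0LessThan del: sum.lessThan_Suc)
  also have "\<dots> = (\<Sum>c\<le>r. of_nat (r choose c) * (a ^ (d - c) * b ^ c))"
    using r by (intro sum.mono_neutral_right) (auto simp: binomial_eq_0)
  also have "\<dots> = a ^ (d - r) * (\<Sum>c\<le>r. of_nat (r choose c) * b ^ c * a ^ (r - c))"
    unfolding sum_distrib_left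
  proof (intro sum.cong refl)
    fix c assume "c \<in> {..r}"
    then have "a ^ (d - c) = a ^ (d - r) * a ^ (r - c)" using r by (simp flip: power_add)
    then show "of_nat (r choose c) * (a ^ (d - c) * b ^ c) = a ^ (d - r) * (of_nat (r choose c) * b ^ c * a ^ (r - c))"
      by (simp add: algebra_simps)
  qed
  also have "\<dots> = a ^ (d - r) * (b + a) ^ r"
    by (simp only: binomial_ring)
  also have "\<dots> = power_vec d a (a + b) $ r"
    using r by (simp add: power_vec_def add.commute)
  finally show "(binom_low d *\<^sub>v power_vec d a b) $ r = power_vec d a (a + b) $ r" .
qed (simp add: binom_low_def power_vec_def)

lemma binom_up_power_vec: "binom_up d *\<^sub>v power_vec d a b = power_vec d (a + b) b"
proof (rule eq_vecI)
  fix r assume "r < dim_vec (power_vec d (a + b) b)"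
  then have r: "r \<le> d" by (simp add: power_vec_def)
  have "(binom_up d *\<^sub>v power_vec d a b) $ r
      = (\<Sum>c<Suc d. up_binom d r c * (a ^ (d - c) * b ^ c))"
    using r by (simp add: binom_up_def power_vec_def scalar_prod_def atLeast0LessThan del: sum.lessThan_Suc)
  also have "\<dots> = (\<Sum>c\<in>{r..d}. of_nat ((d - r) choose (c - r)) * (a ^ (d - c) * b ^ c))"
    by (rule sum.mono_neutral_cong_right) (auto simp: up_binom_def)
  also have "\<dots> = (\<Sum>j\<le>d - r. of_nat ((d - r) choose j) * (a ^ (d - r - j) * b ^ (j + r)))"
    using r by (subst sum.atLeastAtMost_shift_0) (auto simp: atLeast0AtMost diff_diff_add add.commute)
  also have "\<dots> = b ^ r * (\<Sum>j\<le>d - r. of_nat ((d - r) choose j) * b ^ j * a ^ (d - r - j))"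
    unfolding sum_distrib_left by (intro sum.cong refl) (simp add: power_add algebra_simps)
  also have "\<dots> = b ^ r * (b + a) ^ (d - r)"
    by (simp only: binomial_ring)
  also have "\<dots> = power_vec d (a + b) b $ r"
    using r by (simp add: power_vec_def add.commute mult.commute)
  finally show "(binom_up d *\<^sub>v power_vec d a b) $ r = power_vec d (a + b) b $ r" .
qed (simp add: binom_up_def power_vec_def)

lemma Pmat_eq: "Pmat d = mexp (xstar_rep d) * (binom_low d :: 'a::field_char_0 mat)"
  unfolding Pmat_def phi_xstar phi_ystar mexp_rep_f ..

lemma mexp_xstar_rep_carrier [simp]:
  "(mexp (xstar_rep d) :: 'a::field_char_0 mat) \<in> carrier_mat (Suc d) (Suc d)"
  by (simp add: mexp_nilpotent[OF xstar_rep_carrier xstar_rep_nilpotent])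

lemma Pmat_carrier [simp]: "(Pmat d :: 'a::field_char_0 mat) \<in> carrier_mat (Suc d) (Suc d)"
  unfolding Pmat_eq by (rule mult_carrier_mat[of _ "Suc d" "Suc d"]) simp_all

(* The key formula: P u(a,b) = u(a-b, a).  Indeed u(a,a+b) = U u(-b,a+b), so
  P u(a,b) = exp(xstar) u(a,a+b) = U exp(f) u(-b,a+b) = U u(-b,a) = u(a-b,a). *)
lemma Pmat_power_vec: "Pmat d *\<^sub>v power_vec d a b = power_vec d (a - b) (a :: 'a::field_char_0)"
proof -
  let ?E = "mexp (xstar_rep d) :: 'a mat" and ?L = "binom_low d :: 'a mat" and ?U = "binom_up d :: 'a mat"
  have "Pmat d *\<^sub>v power_vec d a b = ?E *\<^sub>v (?L *\<^sub>v power_vec d a b)"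
    unfolding Pmat_eq by (rule assoc_mult_mat_vec[of _ "Suc d" "Suc d" _ "Suc d"]) auto
  also have "?L *\<^sub>v power_vec d a b = ?U *\<^sub>v power_vec d (- b) (a + b)"
    unfolding binom_low_power_vec binom_up_power_vec by simp
  also have "?E *\<^sub>v (?U *\<^sub>v power_vec d (- b) (a + b)) = (?U * ?L) *\<^sub>v power_vec d (- b) (a + b)"
    unfolding mexp_xstar_binom_up[symmetric] by (rule assoc_mult_mat_vec[of _ "Suc d" "Suc d" _ "Suc d", symmetric]) auto
  also have "\<dots> = ?U *\<^sub>v (?L *\<^sub>v power_vec d (- b) (a + b))"
    by (rule assoc_mult_mat_vec[of _ "Suc d" "Suc d" _ "Suc d"]) auto
  also have "\<dots> = power_vec d (a - b) a"
    unfolding binom_low_power_vec binom_up_power_vec by simp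
  finally show ?thesis .
qed

lemma vb_0_power_vec: "vb d 0 = power_vec d 1 (0 :: 'a::field_char_0)"
  by (rule eq_vecI) (auto simp: vb_def power_vec_def)

lemma vsum_vb_power_vec: "vsum d (\<lambda>i. vb d i) = power_vec d 1 (1 :: 'a::field_char_0)"
  by (rule eq_vecI) (auto simp: vsum_def vb_def power_vec_def)

lemma vsum_mult_mat_vec:
  fixes A :: "'a::field_char_0 mat"
  assumes A: "A \<in> carrier_mat (Suc d) (Suc d)" and g: "\<And>i. g i \<in> carrier_vec (Suc d)"
  shows "vsum d (\<lambda>i. A *\<^sub>v g i) = A *\<^sub>v vsum d g"
proof (rule eq_vecI)
  fix r assume "r < dim_vec (A *\<^sub>v vsum d g)"
  then have r: "r < Suc d" using A by simp
  have "vsum d (\<lambda>i. A *\<^sub>v g i) $ r = (\<Sum>i\<le>d. \<Sum>j<Suc d. A $$ (r,j) * g i $ j)"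
    using r A carrier_vecD[OF g] by (simp add: vsum_def scalar_prod_def atLeast0LessThan del: sum.lessThan_Suc)
  also have "\<dots> = (\<Sum>j<Suc d. A $$ (r,j) * (\<Sum>i\<le>d. g i $ j))"
    by (subst sum.swap) (simp add: sum_distrib_left)
  also have "\<dots> = (A *\<^sub>v vsum d g) $ r"
    using r A by (simp add: vsum_def scalar_prod_def atLeast0LessThan del: sum.lessThan_Suc)
  finally show "vsum d (\<lambda>i. A *\<^sub>v g i) $ r = (A *\<^sub>v vsum d g) $ r" .
qed (use A in \<open>simp add: vsum_def\<close>)

theorem corollary8p14:
  fixes d :: nat
  defines "P \<equiv> (Pmat d :: 'a::field_char_0 mat)"
  shows "P *\<^sub>v vb d 0 = vsum d (\<lambda>i. vb d i)
    \<and> (P * P) *\<^sub>v vb d 0 = vsum d (\<lambda>i. P *\<^sub>v vb d i)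
    \<and> (-1) ^ d \<cdot>\<^sub>v (vb d 0 :: 'a vec) = vsum d (\<lambda>i. (P * P) *\<^sub>v vb d i)"
proof -
  have P: "P \<in> carrier_mat (Suc d) (Suc d)" unfolding P_def by simp
  have vb: "\<And>i. vb d i \<in> carrier_vec (Suc d)" by (simp add: vb_def)
  have PP: "(P * P) *\<^sub>v v = P *\<^sub>v (P *\<^sub>v v)" if "v \<in> carrier_vec (Suc d)" for v
    by (rule assoc_mult_mat_vec[OF P P that])
  have step1: "P *\<^sub>v power_vec d 1 0 = power_vec d 1 1"
    and step2: "P *\<^sub>v power_vec d 1 1 = power_vec d 0 1"
    and step3: "P *\<^sub>v power_vec d 0 1 = power_vec d (-1) 0"
    unfolding P_def Pmat_power_vec by simp_all
  have sum_P: "vsum d (\<lambda>i. P *\<^sub>v vb d i) = P *\<^sub>v power_vec d 1 1"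
    and sum_PP: "vsum d (\<lambda>i. (P * P) *\<^sub>v vb d i) = (P * P) *\<^sub>v power_vec d 1 1"
    using vsum_mult_mat_vec[OF P vb] vsum_mult_mat_vec[OF mult_carrier_mat[OF P P] vb]
    by (simp_all add: vsum_vb_power_vec)
  have sign: "power_vec d (-1) 0 = (-1) ^ d \<cdot>\<^sub>v (vb d 0 :: 'a vec)"
    by (rule eq_vecI) (auto simp: power_vec_def vb_def)
  show ?thesis
    unfolding sum_P sum_PP vsum_vb_power_vec vb_0_power_vec PP[OF power_vec_carrier]
    by (simp add: step1 step2 step3 sign vb_0_power_vec)
qed

end
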